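(* Let $R$, $G$, $*$, $\sigma$ and $\mathcal{S}$ be as in the context. If $\mathcal{S}$ is anticommutative, then $c_x=x^*x^{-1}$ lies in the center $\mathcal{Z}(G)$ of $G$ for every $x\in G$.
   Context: Throughout, $R$ is a commutative ring with unity with $\operatorname{char}(R)\neq 2$, and $\mathcal{U}(R)$ is its unit group. $G$ is a group with an involution $*$, i.e. a map $x\mapsto x^*$ with $(xy)^*=y^*x^*$ and $(x^* )^*=x$. The map $\sigma:G\to\mathcal{U}(R)$ is a nontrivial group homomorphism with kernel $N=\ker\sigma$, and it is compatible with $*$: $xx^*\in N$ for all $x\in G$. The group ring $RG$ carries the involution $\left(\sum_{x\in G}\alpha_x x\right)^{\sigma*}=\sum_{x\in G}\sigma(x)\alpha_x x^*$. Write $G_*=\{x\in G: x^*=x\}$ and $N_*=G_*\cap N$. Let $\mathcal{S}$ be the $R$-submodule of $RG$ spanned by the union of the following three sets: - $2\mathcal{S}_1=\{2x: x\in N_*\}$; - $\mathcal{S}_2=\{\alpha x: x\in G_*\setminus N,\ \alpha\in R,\ \alpha(1-\sigma(x))=0\}$; - $\mathcal{S}_3=\{x+\sigma(x)x^*: x\in G\setminus G_*\}$. $\mathcal{S}$ is called anticommutative if $ab+ba=0$ for all $a,b\in\mathcal{S}$. *)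

theory Defs
  imports "HOL-Algebra.Group"
begin

text \<open>The group ring RG, modelled as finitely supported functions from the carrier
of G to R (zero outside the carrier).\<close>

definition gr_supp :: "('g, 'b) monoid_scheme \<Rightarrow> ('g \<Rightarrow> 'r::comm_ring_1) \<Rightarrow> 'g set" where
  "gr_supp G a = {h \<in> carrier G. a h \<noteq> 0}"

definition gr_mult :: "('g, 'b) monoid_scheme \<Rightarrow> ('g \<Rightarrow> 'r::comm_ring_1) \<Rightarrow> ('g \<Rightarrow> 'r) \<Rightarrow> 'g \<Rightarrow> 'r" where
  "gr_mult G a b = (\<lambda>g. if g \<in> carrier G
      then (\<Sum>h\<in>gr_supp G a. a h * b (inv\<^bsub>G\<^esub> h \<otimes>\<^bsub>G\<^esub> g)) else 0)"

definition gr_elem :: "'r::comm_ring_1 \<Rightarrow> 'g \<Rightarrow> 'g \<Rightarrow> 'r" where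
  "gr_elem \<alpha> x = (\<lambda>g. if g = x then \<alpha> else 0)"

text \<open>The generating set S1' \<union> S2 \<union> S3 (with S1' = 2 S1).\<close>
definition S_gens :: "('g, 'b) monoid_scheme \<Rightarrow> ('g \<Rightarrow> 'g) \<Rightarrow> ('g \<Rightarrow> 'r::comm_ring_1) \<Rightarrow> ('g \<Rightarrow> 'r) set" where
  "S_gens G star \<sigma> =
     {gr_elem 2 x | x. x \<in> carrier G \<and> star x = x \<and> \<sigma> x = 1}
   \<union> {gr_elem \<alpha> x | x \<alpha>. x \<in> carrier G \<and> star x = x \<and> \<sigma> x \<noteq> 1 \<and> \<alpha> * (1 - \<sigma> x) = 0}
   \<union> {(\<lambda>g. gr_elem 1 x g + gr_elem (\<sigma> x) (star x) g) | x. x \<in> carrier G \<and> star x \<noteq> x}"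

inductive_set gr_span :: "('g \<Rightarrow> 'r::comm_ring_1) set \<Rightarrow> ('g \<Rightarrow> 'r) set" for A where
  zero: "(\<lambda>g. 0) \<in> gr_span A"
| gen: "a \<in> A \<Longrightarrow> a \<in> gr_span A"
| add: "a \<in> gr_span A \<Longrightarrow> b \<in> gr_span A \<Longrightarrow> (\<lambda>g. a g + b g) \<in> gr_span A"
| smult: "a \<in> gr_span A \<Longrightarrow> (\<lambda>g. r * a g) \<in> gr_span A"

definition S_set :: "('g, 'b) monoid_scheme \<Rightarrow> ('g \<Rightarrow> 'g) \<Rightarrow> ('g \<Rightarrow> 'r::comm_ring_1) \<Rightarrow> ('g \<Rightarrow> 'r) set" where
  "S_set G star \<sigma> = gr_span (S_gens G star \<sigma>)"

definition anticommutative :: "('g, 'b) monoid_scheme \<Rightarrow> ('g \<Rightarrow> 'r::comm_ring_1) set \<Rightarrow> bool" where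
  "anticommutative G S \<longleftrightarrow>
     (\<forall>a\<in>S. \<forall>b\<in>S. (\<lambda>g. gr_mult G a b g + gr_mult G b a g) = (\<lambda>g. 0))"

definition group_center :: "('g, 'b) monoid_scheme \<Rightarrow> 'g set" where
  "group_center G = {z \<in> carrier G. \<forall>y\<in>carrier G. z \<otimes>\<^bsub>G\<^esub> y = y \<otimes>\<^bsub>G\<^esub> z}"

end

theory Submission
  imports Defs
begin

(* For x <> x* the element u_x = x + sigma(x) x* lies in S, and comparing coefficients in
   u_x u_x + u_x u_x = 0 gives x x* = x* x, x*^2 = x^2, 4 = 0 and 2 (1 + sigma(x)^2) = 0.
   Hence c_x = x* x^-1 is a symmetric involution commuting with x, and 2 c_x lies in S.
   For every symmetric w with 2 w in S, comparing coefficients in u_z (2 w) + (2 w) u_z = 0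
   gives z w in {w z, w z*}. If c_x did not commute with a nonsymmetric y, these relations
   would make <c_x, c_y> a Klein four-group and put all eight products of u_x u_y + u_y u_x
   into one of its cosets, where the coefficients cannot cancel. A symmetric y is reduced to
   y x or y x*, unless both are symmetric, in which case c_x y = y c_x is computed directly. *)

definition gr_binom :: "'r::comm_ring_1 \<Rightarrow> 'g \<Rightarrow> 'r \<Rightarrow> 'g \<Rightarrow> 'g \<Rightarrow> 'r" where
  "gr_binom a x b y = (\<lambda>g. gr_elem a x g + gr_elem b y g)"

lemma gr_mult_eq_sum_superset:
  assumes "finite F" "F \<subseteq> carrier G" "gr_supp G a \<subseteq> F"
  shows "gr_mult G a b g =
    (if g \<in> carrier G then (\<Sum>h\<in>F. a h * b (inv\<^bsub>G\<^esub> h \<otimes>\<^bsub>G\<^esub> g)) else 0)"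
proof -
  have "(\<Sum>h\<in>gr_supp G a. a h * b (inv\<^bsub>G\<^esub> h \<otimes>\<^bsub>G\<^esub> g))
      = (\<Sum>h\<in>F. a h * b (inv\<^bsub>G\<^esub> h \<otimes>\<^bsub>G\<^esub> g))"
    by (rule sum.mono_neutral_left) (use assms in \<open>auto simp: gr_supp_def\<close>)
  then show ?thesis by (simp add: gr_mult_def)
qed

lemma (in group) gr_mult_gr_binom:
  assumes "x1 \<in> carrier G" "x2 \<in> carrier G" "y1 \<in> carrier G" "y2 \<in> carrier G" "g \<in> carrier G"
  shows "gr_mult G (gr_binom a1 x1 a2 x2) (gr_binom b1 y1 b2 y2) g =
     (if x1 \<otimes> y1 = g then a1 * b1 else 0) + (if x1 \<otimes> y2 = g then a1 * b2 else 0)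
   + (if x2 \<otimes> y1 = g then a2 * b1 else 0) + (if x2 \<otimes> y2 = g then a2 * b2 else 0)"
proof -
  have supp: "gr_supp G (gr_binom a1 x1 a2 x2) \<subseteq> {x1, x2}"
    by (auto simp: gr_supp_def gr_binom_def gr_elem_def)
  have shift: "gr_binom b1 y1 b2 y2 (inv h \<otimes> g) =
      (if h \<otimes> y1 = g then b1 else 0) + (if h \<otimes> y2 = g then b2 else 0)"
    if "h \<in> carrier G" for h
    using that assms by (simp add: gr_binom_def gr_elem_def inv_solve_left')
  have "gr_mult G (gr_binom a1 x1 a2 x2) (gr_binom b1 y1 b2 y2) g =
     (\<Sum>h\<in>{x1,x2}. gr_binom a1 x1 a2 x2 h * gr_binom b1 y1 b2 y2 (inv h \<otimes> g))"
    using gr_mult_eq_sum_superset[OF _ _ supp] assms by simp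
  also have "\<dots> = (if x1 \<otimes> y1 = g then a1 * b1 else 0) + (if x1 \<otimes> y2 = g then a1 * b2 else 0)
   + (if x2 \<otimes> y1 = g then a2 * b1 else 0) + (if x2 \<otimes> y2 = g then a2 * b2 else 0)"
    using assms
    by (cases "x1 = x2"; simp add: shift; simp add: gr_binom_def gr_elem_def algebra_simps)
  finally show ?thesis .
qed

lemma (in group) commute_of_commute_mult:
  assumes "a \<in> carrier G" "g \<in> carrier G" "z \<in> carrier G"
    and "a \<otimes> z = z \<otimes> a" "a \<otimes> (g \<otimes> z) = (g \<otimes> z) \<otimes> a"
  shows "a \<otimes> g = g \<otimes> a"
proof -
  have "(a \<otimes> g) \<otimes> z = (g \<otimes> a) \<otimes> z"
    using assms by (simp add: m_assoc)
  then show ?thesis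
    using assms by simp
qed

lemma mult_unit_eq_zero_iff:
  fixes a u :: "'a::comm_semiring_1"
  assumes "u dvd 1"
  shows "a * u = 0 \<longleftrightarrow> a = 0"
  using assms by (metis dvdE mult.assoc mult_1_right mult_zero_left)

locale S_anticommutative = group G for G :: "('g, 'b) monoid_scheme" (structure) +
  fixes star :: "'g \<Rightarrow> 'g" and \<sigma> :: "'g \<Rightarrow> 'r::comm_ring_1"
  assumes two_neq_zero: "(2::'r) \<noteq> 0"
    and star_closed [simp]: "\<And>x. x \<in> carrier G \<Longrightarrow> star x \<in> carrier G"
    and star_mult: "\<And>x y. x \<in> carrier G \<Longrightarrow> y \<in> carrier G \<Longrightarrow> star (x \<otimes> y) = star y \<otimes> star x"
    and star_star [simp]: "\<And>x. x \<in> carrier G \<Longrightarrow> star (star x) = x"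
    and sigma_unit: "\<And>x. x \<in> carrier G \<Longrightarrow> \<sigma> x dvd 1"
    and sigma_mult: "\<And>x y. x \<in> carrier G \<Longrightarrow> y \<in> carrier G \<Longrightarrow> \<sigma> (x \<otimes> y) = \<sigma> x * \<sigma> y"
    and sigma_mult_star: "\<And>x. x \<in> carrier G \<Longrightarrow> \<sigma> (x \<otimes> star x) = 1"
    and anticomm: "anticommutative G (S_set G star \<sigma>)"
begin

lemma gr_binom_anticomm:
  assumes "gr_binom a1 x1 a2 x2 \<in> S_set G star \<sigma>" "gr_binom b1 y1 b2 y2 \<in> S_set G star \<sigma>"
    and "x1 \<in> carrier G" "x2 \<in> carrier G" "y1 \<in> carrier G" "y2 \<in> carrier G" "g \<in> carrier G"
  shows "(if x1 \<otimes> y1 = g then a1 * b1 else 0) + (if x1 \<otimes> y2 = g then a1 * b2 else 0)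
   + (if x2 \<otimes> y1 = g then a2 * b1 else 0) + (if x2 \<otimes> y2 = g then a2 * b2 else 0)
   + ((if y1 \<otimes> x1 = g then b1 * a1 else 0) + (if y1 \<otimes> x2 = g then b1 * a2 else 0)
   + (if y2 \<otimes> x1 = g then b2 * a1 else 0) + (if y2 \<otimes> x2 = g then b2 * a2 else 0)) = 0"
proof -
  have "(\<lambda>g. gr_mult G (gr_binom a1 x1 a2 x2) (gr_binom b1 y1 b2 y2) g
           + gr_mult G (gr_binom b1 y1 b2 y2) (gr_binom a1 x1 a2 x2) g) = (\<lambda>g. 0)"
    using anticomm assms(1,2) unfolding anticommutative_def by blast
  then have "gr_mult G (gr_binom a1 x1 a2 x2) (gr_binom b1 y1 b2 y2) g
           + gr_mult G (gr_binom b1 y1 b2 y2) (gr_binom a1 x1 a2 x2) g = 0"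
    by (rule fun_cong)
  then show ?thesis
    using assms by (simp only: gr_mult_gr_binom)
qed

lemma gr_binom_star_in_S:
  assumes "x \<in> carrier G" "star x \<noteq> x"
  shows "gr_binom 1 x (\<sigma> x) (star x) \<in> S_set G star \<sigma>"
  unfolding S_set_def gr_binom_def
  by (rule gr_span.gen) (use assms in \<open>unfold S_gens_def, blast\<close>)

definition twice_in_S :: "'g \<Rightarrow> bool" where
  "twice_in_S w \<longleftrightarrow> w \<in> carrier G \<and> star w = w \<and> 2 * (1 - \<sigma> w) = 0"

lemma gr_binom_double_in_S:
  assumes "twice_in_S w"
  shows "gr_binom 2 w 0 w \<in> S_set G star \<sigma>"
proof -
  have "gr_binom 2 w 0 w = gr_elem (2::'r) w"
    by (auto simp: gr_binom_def gr_elem_def)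
  moreover have "gr_elem 2 w \<in> S_gens G star \<sigma>"
    using assms unfolding twice_in_S_def S_gens_def
    by (cases "\<sigma> w = 1") (auto intro!: exI[of _ 2])
  ultimately show ?thesis
    unfolding S_set_def by (simp add: gr_span.gen)
qed

lemma star_binom_anticomm:
  assumes x: "x \<in> carrier G" "star x \<noteq> x" and g: "g \<in> carrier G"
  shows "(if x \<otimes> x = g then 1 else 0) + (if x \<otimes> star x = g then \<sigma> x else 0)
   + (if star x \<otimes> x = g then \<sigma> x else 0) + (if star x \<otimes> star x = g then \<sigma> x * \<sigma> x else 0)
   + ((if x \<otimes> x = g then 1 else 0) + (if x \<otimes> star x = g then \<sigma> x else 0)
   + (if star x \<otimes> x = g then \<sigma> x else 0) + (if star x \<otimes> star x = g then \<sigma> x * \<sigma> x else 0)) = 0"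
  using gr_binom_anticomm[OF gr_binom_star_in_S[OF x] gr_binom_star_in_S[OF x]] x g by simp

lemma mult_star_commute:
  assumes x: "x \<in> carrier G"
  shows "x \<otimes> star x = star x \<otimes> x"
proof (rule ccontr)
  assume ne: "x \<otimes> star x \<noteq> star x \<otimes> x"
  then have nx: "star x \<noteq> x" by auto
  have "x \<otimes> x \<noteq> x \<otimes> star x" "star x \<otimes> star x \<noteq> x \<otimes> star x"
    using x nx by simp_all
  then have "\<sigma> x + \<sigma> x = 0"
    using star_binom_anticomm[OF x nx m_closed[OF x star_closed[OF x]]] ne not_sym[OF ne]
    by (simp only: if_True if_False simp_thms add_0_left add_0_right)
  then have "2 * \<sigma> x = 0" by (simp only: mult_2)
  then show False
    using mult_unit_eq_zero_iff[OF sigma_unit[OF x]] two_neq_zero by simp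
qed

lemma star_square:
  assumes x: "x \<in> carrier G"
  shows "star x \<otimes> star x = x \<otimes> x"
proof (rule ccontr)
  assume ne: "star x \<otimes> star x \<noteq> x \<otimes> x"
  then have nx: "star x \<noteq> x" by auto
  have "x \<otimes> star x \<noteq> x \<otimes> x" "star x \<otimes> x \<noteq> x \<otimes> x"
    using x nx by simp_all
  then have "(1::'r) + 1 = 0"
    using star_binom_anticomm[OF x nx m_closed[OF x x]] ne
    by (simp only: if_True if_False simp_thms add_0_left add_0_right)
  then show False using two_neq_zero by simp
qed

lemma four_eq_zero:
  assumes x: "x \<in> carrier G" "star x \<noteq> x"
  shows "(4::'r) = 0"
proof -
  have "x \<otimes> x \<noteq> x \<otimes> star x" "star x \<otimes> star x \<noteq> x \<otimes> star x"
    using x by simp_all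
  then have "\<sigma> x + \<sigma> x + (\<sigma> x + \<sigma> x) = 0"
    using star_binom_anticomm[OF x m_closed[OF x(1) star_closed[OF x(1)]]] mult_star_commute[OF x(1)]
    by (simp only: if_True if_False simp_thms add_0_left add_0_right)
  moreover have "4 * \<sigma> x = \<sigma> x + \<sigma> x + (\<sigma> x + \<sigma> x)"
    by (simp add: algebra_simps)
  ultimately have "4 * \<sigma> x = 0" by argo
  then show ?thesis
    using mult_unit_eq_zero_iff[OF sigma_unit[OF x(1)]] by simp
qed

lemma two_mult_one_plus_sigma_square:
  assumes x: "x \<in> carrier G" "star x \<noteq> x"
  shows "2 * (1 + \<sigma> x * \<sigma> x) = 0"
proof -
  have "x \<otimes> star x \<noteq> x \<otimes> x" "star x \<otimes> x \<noteq> x \<otimes> x"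
    using x by simp_all
  then have "1 + \<sigma> x * \<sigma> x + (1 + \<sigma> x * \<sigma> x) = 0"
    using star_binom_anticomm[OF x m_closed[OF x(1) x(1)]] star_square[OF x(1)]
    by (simp only: if_True if_False simp_thms add_0_left add_0_right)
  then show ?thesis by (simp only: mult_2)
qed

definition twist :: "'g \<Rightarrow> 'g" where
  "twist x = star x \<otimes> inv x"

lemma twist_closed [simp]: "x \<in> carrier G \<Longrightarrow> twist x \<in> carrier G"
  by (simp add: twist_def)

lemma twist_mult_self: "x \<in> carrier G \<Longrightarrow> twist x \<otimes> x = star x"
  by (simp add: twist_def m_assoc)

lemma mult_twist_self:
  assumes x: "x \<in> carrier G"
  shows "x \<otimes> twist x = star x"
proof -
  have "x \<otimes> twist x = (x \<otimes> star x) \<otimes> inv x"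
    using x by (simp add: twist_def m_assoc)
  also have "\<dots> = star x"
    using x by (simp add: mult_star_commute m_assoc)
  finally show ?thesis .
qed

lemma twist_square:
  assumes x: "x \<in> carrier G"
  shows "twist x \<otimes> twist x = \<one>"
proof -
  let ?c = "twist x"
  have c: "?c \<in> carrier G"
    using x by simp
  have "(?c \<otimes> ?c) \<otimes> (x \<otimes> x) = ?c \<otimes> ((?c \<otimes> x) \<otimes> x)"
    using x c by (simp add: m_assoc)
  also have "\<dots> = ?c \<otimes> (x \<otimes> ?c \<otimes> x)"
    using x by (simp add: twist_mult_self mult_twist_self)
  also have "\<dots> = (?c \<otimes> x) \<otimes> (?c \<otimes> x)"
    using x c by (simp add: m_assoc)
  also have "\<dots> = x \<otimes> x"
    using x by (simp add: twist_mult_self star_square)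
  finally show ?thesis
    using x c by simp
qed

lemma star_mult_twist:
  assumes x: "x \<in> carrier G"
  shows "star x \<otimes> twist x = x"
proof -
  have "star x \<otimes> twist x = (twist x \<otimes> x) \<otimes> twist x"
    using x by (simp add: twist_mult_self)
  also have "\<dots> = twist x \<otimes> (x \<otimes> twist x)"
    using x by (simp only: m_assoc twist_closed)
  also have "\<dots> = twist x \<otimes> (twist x \<otimes> x)"
    using x by (simp only: mult_twist_self twist_mult_self)
  also have "\<dots> = x"
    using x by (simp add: twist_square m_assoc[symmetric])
  finally show ?thesis .
qed

lemma twist_mult_star:
  assumes x: "x \<in> carrier G"
  shows "twist x \<otimes> star x = x"
  using x by (simp add: twist_square flip: twist_mult_self m_assoc)

lemma star_twist:
  assumes x: "x \<in> carrier G"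
  shows "star (twist x) = twist x"
proof -
  have "star x \<otimes> star (twist x) = star (twist x \<otimes> x)"
    using x by (simp add: star_mult)
  also have "\<dots> = star x \<otimes> twist x"
    using x by (simp add: twist_mult_self star_mult_twist)
  finally show ?thesis
    using x by simp
qed

lemma twist_eq_one_iff:
  assumes x: "x \<in> carrier G"
  shows "twist x = \<one> \<longleftrightarrow> star x = x"
proof -
  have "twist x = \<one> \<longleftrightarrow> twist x \<otimes> x = x"
    using x by simp
  then show ?thesis
    using x by (simp add: twist_mult_self)
qed

lemma twice_in_S_twist:
  assumes x: "x \<in> carrier G" "star x \<noteq> x"
  shows "twice_in_S (twist x)"
proof -
  let ?s = "\<sigma> x * \<sigma> x"
  have "\<sigma> (twist x) * \<sigma> x = \<sigma> (star x)"
    using x by (metis sigma_mult twist_closed twist_mult_self)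
  then have inv: "\<sigma> (twist x) * ?s = 1"
    using x sigma_mult_star sigma_mult by (metis star_closed mult.left_commute)
  have "2 * (1 - \<sigma> (twist x)) * ?s = 2 * (1 + ?s) - 4"
    using inv by (simp add: algebra_simps)
  also have "\<dots> = 0"
    using four_eq_zero[OF x] two_mult_one_plus_sigma_square[OF x] by simp
  finally have "2 * (1 - \<sigma> (twist x)) * ?s = 0" .
  moreover have "?s dvd 1"
    using mult_dvd_mono[OF sigma_unit sigma_unit] x by fastforce
  ultimately have "2 * (1 - \<sigma> (twist x)) = 0"
    using mult_unit_eq_zero_iff by blast
  then show ?thesis
    unfolding twice_in_S_def using x star_twist by simp
qed

lemma twice_in_S_square:
  assumes y: "y \<in> carrier G" "star y \<noteq> y"
  shows "twice_in_S (y \<otimes> y)"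
proof -
  have "2 * (1 - \<sigma> (y \<otimes> y)) = 2 * (1 + \<sigma> y * \<sigma> y) - 4 * (\<sigma> y * \<sigma> y)"
    using y by (simp add: sigma_mult algebra_simps)
  also have "\<dots> = 0"
    using four_eq_zero[OF y] two_mult_one_plus_sigma_square[OF y] by simp
  finally show ?thesis
    unfolding twice_in_S_def using y by (simp add: star_mult star_square)
qed

lemma mult_twice_in_S_cases:
  assumes z: "z \<in> carrier G" "star z \<noteq> z" and w: "twice_in_S w"
  shows "z \<otimes> w = w \<otimes> z \<or> z \<otimes> w = w \<otimes> star z"
proof (rule ccontr)
  assume ne: "\<not> (z \<otimes> w = w \<otimes> z \<or> z \<otimes> w = w \<otimes> star z)"
  have wc: "w \<in> carrier G"
    using w by (simp add: twice_in_S_def)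
  have "star z \<otimes> w \<noteq> z \<otimes> w" "w \<otimes> z \<noteq> z \<otimes> w" "w \<otimes> star z \<noteq> z \<otimes> w"
    using z wc ne by auto
  then have "(1::'r) * 2 + 1 * 0 + 0 + 0 + (0 + 0 + 0 + 0) = 0"
    using gr_binom_anticomm[OF gr_binom_star_in_S[OF z] gr_binom_double_in_S[OF w]
        z(1) star_closed[OF z(1)] wc wc m_closed[OF z(1) wc]] ne
    by (simp only: if_True if_False simp_thms)
  then show False
    using two_neq_zero by simp
qed

lemma twist_commute_twice_in_S:
  assumes x: "x \<in> carrier G" "star x \<noteq> x" and w: "twice_in_S w"
  shows "twist x \<otimes> w = w \<otimes> twist x"
proof -
  let ?c = "twist x"
  have wc: "w \<in> carrier G" and c: "?c \<in> carrier G" and xs: "star x \<in> carrier G"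
    using w x by (simp_all add: twice_in_S_def)
  have x_w: "x \<otimes> w = w \<otimes> x \<or> x \<otimes> w = w \<otimes> star x"
    using mult_twice_in_S_cases[OF x w] .
  have xs_w: "star x \<otimes> w = w \<otimes> star x \<or> star x \<otimes> w = w \<otimes> x"
    using mult_twice_in_S_cases[of "star x", OF xs _ w] x by auto
  have "(?c \<otimes> w) \<otimes> x = (w \<otimes> ?c) \<otimes> x"
  proof (cases "x \<otimes> w = w \<otimes> x")
    case True
    moreover have "star x \<otimes> w \<noteq> x \<otimes> w"
      using x wc by simp
    ultimately have "star x \<otimes> w = w \<otimes> star x"
      using xs_w by auto
    have "(?c \<otimes> w) \<otimes> x = (?c \<otimes> x) \<otimes> w"
      using True x wc c by (simp add: m_assoc)
    also have "\<dots> = w \<otimes> (?c \<otimes> x)"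
      using x \<open>star x \<otimes> w = w \<otimes> star x\<close> by (simp add: twist_mult_self)
    finally show ?thesis
      using x wc c by (simp add: m_assoc)
  next
    case False
    moreover have "star x \<otimes> w \<noteq> x \<otimes> w"
      using x wc by simp
    ultimately have "x \<otimes> w = w \<otimes> star x" and "star x \<otimes> w = w \<otimes> x"
      using x_w xs_w by auto
    have "(?c \<otimes> w) \<otimes> x = (?c \<otimes> star x) \<otimes> w"
      using \<open>star x \<otimes> w = w \<otimes> x\<close> x wc c by (simp add: m_assoc)
    also have "\<dots> = w \<otimes> (?c \<otimes> x)"
      using x \<open>x \<otimes> w = w \<otimes> star x\<close> by (simp add: twist_mult_star twist_mult_self)
    finally show ?thesis
      using x wc c by (simp add: m_assoc)
  qed
  then show ?thesis
    using x wc c by simp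
qed

lemma twist_mult_twist_commute:
  assumes "x \<in> carrier G" "star x \<noteq> x" "y \<in> carrier G" "star y \<noteq> y"
  shows "twist x \<otimes> twist y = twist y \<otimes> twist x"
  using twist_commute_twice_in_S[OF assms(1,2) twice_in_S_twist[OF assms(3,4)]] .

lemma mult_twist_cases:
  assumes x: "x \<in> carrier G" "star x \<noteq> x" and y: "y \<in> carrier G" "star y \<noteq> y"
  shows "y \<otimes> twist x = twist x \<otimes> y \<or> y \<otimes> twist x = twist x \<otimes> (twist y \<otimes> y)"
  using mult_twice_in_S_cases[OF y twice_in_S_twist[OF x]] y by (simp add: twist_mult_self)

lemma twist_commute_nonsymmetric:
  assumes x: "x \<in> carrier G" "star x \<noteq> x" and y: "y \<in> carrier G" "star y \<noteq> y"
  shows "twist x \<otimes> y = y \<otimes> twist x"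
proof (rule ccontr)
  assume ne: "twist x \<otimes> y \<noteq> y \<otimes> twist x"
  define c d where "c = twist x" and "d = twist y"
  have c: "c \<in> carrier G" "c \<noteq> \<one>" and d: "d \<in> carrier G" "d \<noteq> \<one>"
    using x y by (simp_all add: c_def d_def twist_eq_one_iff)
  have sx: "star x = c \<otimes> x" and sy: "star y = d \<otimes> y"
    using x y by (simp_all add: c_def d_def twist_mult_self)
  have cc: "c \<otimes> (c \<otimes> q) = q" and dd: "d \<otimes> (d \<otimes> q) = q" if "q \<in> carrier G" for q
    using x y that by (simp_all add: c_def d_def twist_square flip: m_assoc)
  have cd: "c \<otimes> d = d \<otimes> c"
    using twist_mult_twist_commute[OF x y] by (simp add: c_def d_def)
  then have dc: "d \<otimes> (c \<otimes> q) = c \<otimes> (d \<otimes> q)" if "q \<in> carrier G" for q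
    using c d that by (simp flip: m_assoc)
  have xc: "x \<otimes> (c \<otimes> q) = c \<otimes> (x \<otimes> q)" and yd: "y \<otimes> (d \<otimes> q) = d \<otimes> (y \<otimes> q)"
    if "q \<in> carrier G" for q
    using x y that by (simp_all add: c_def d_def mult_twist_self twist_mult_self flip: m_assoc)
  have y_c: "y \<otimes> c = c \<otimes> (d \<otimes> y)"
    using mult_twist_cases[OF x y] ne by (auto simp: c_def d_def)
  then have yc: "y \<otimes> (c \<otimes> q) = c \<otimes> (d \<otimes> (y \<otimes> q))" if "q \<in> carrier G" for q
    using c d y that by (simp flip: m_assoc)
  have "c \<noteq> d"
    using y_c y c cc by (auto simp flip: m_assoc)
  have "x \<otimes> d = d \<otimes> x \<or> x \<otimes> d = d \<otimes> (c \<otimes> x)"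
    using mult_twist_cases[OF y x] by (simp add: c_def d_def)
  then have xd: "(\<forall>q\<in>carrier G. x \<otimes> (d \<otimes> q) = d \<otimes> (x \<otimes> q))
      \<or> (\<forall>q\<in>carrier G. x \<otimes> (d \<otimes> q) = c \<otimes> (d \<otimes> (x \<otimes> q)))"
    using x c d cd by (auto simp flip: m_assoc)
  have xyy: "x \<otimes> y \<otimes> y = y \<otimes> y \<otimes> x \<or> x \<otimes> y \<otimes> y = y \<otimes> y \<otimes> star x"
    using mult_twice_in_S_cases[OF x twice_in_S_square[OF y]] x y by (simp add: m_assoc)
  note E = gr_binom_anticomm[OF gr_binom_star_in_S[OF x] gr_binom_star_in_S[OF y]
      x(1) star_closed[OF x(1)] y(1) star_closed[OF y(1)]]
  have cd_ne: "c \<otimes> (d \<otimes> q) \<noteq> q" "q \<noteq> c \<otimes> (d \<otimes> q)" if "q \<in> carrier G" for q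
  proof -
    have "c \<otimes> d \<noteq> c \<otimes> c"
      using c d \<open>c \<noteq> d\<close> by simp
    then have "c \<otimes> d \<noteq> \<one>"
      using twist_square[OF x(1)] by (simp add: c_def)
    then show "c \<otimes> (d \<otimes> q) \<noteq> q" "q \<noteq> c \<otimes> (d \<otimes> q)"
      using c d that by (simp_all flip: m_assoc)
  qed
  have nz: "2 * \<sigma> x \<noteq> 0" "2 * \<sigma> y \<noteq> 0" "2 * (\<sigma> x * \<sigma> y) \<noteq> 0"
    using two_neq_zero mult_unit_eq_zero_iff[of _ 2] sigma_unit x y
      mult_dvd_mono[OF sigma_unit[OF x(1)] sigma_unit[OF y(1)]] by auto
  let ?P = "y \<otimes> x"
  (* The rules below bring each of the eight products in u_x u_y + u_y u_x to a normal form
     k (y x) or k (x y) with k in {1, c, d, c d}: the first contradiction puts x y into the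
     coset <c, d> y x, the second compares the coefficients on that coset. *)
  note rules = cc dd dc xc yc yd m_assoc sx sy cd_ne \<open>c \<noteq> d\<close> not_sym[OF \<open>c \<noteq> d\<close>] c d x y
    nz two_neq_zero
  have coset: "x \<otimes> y = ?P \<or> x \<otimes> y = c \<otimes> ?P \<or> x \<otimes> y = d \<otimes> ?P \<or> x \<otimes> y = c \<otimes> (d \<otimes> ?P)"
  proof (rule ccontr)
    assume "\<not> ?thesis"
    then have "?P \<noteq> x \<otimes> y" "c \<otimes> ?P \<noteq> x \<otimes> y" "d \<otimes> ?P \<noteq> x \<otimes> y" "c \<otimes> (d \<otimes> ?P) \<noteq> x \<otimes> y"
      by auto
    then show False
      using xd E[of "x \<otimes> y"] by (elim disjE) (simp_all add: rules)
  qed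
  show False
    using xd coset E[of ?P] E[of "c \<otimes> ?P"] E[of "d \<otimes> ?P"] E[of "c \<otimes> (d \<otimes> ?P)"] xyy
    by (elim disjE) (simp_all add: rules)
qed

lemma twist_commute:
  assumes x: "x \<in> carrier G" and y: "y \<in> carrier G"
  shows "twist x \<otimes> y = y \<otimes> twist x"
proof (cases "star x = x")
  case True
  then show ?thesis
    using x y twist_eq_one_iff[OF x] by simp
next
  case nx: False
  let ?c = "twist x"
  have c: "?c \<in> carrier G" and xs: "star x \<in> carrier G"
    using x by simp_all
  have c_x: "?c \<otimes> x = x \<otimes> ?c" and c_xs: "?c \<otimes> star x = star x \<otimes> ?c"
    using x by (simp_all add: twist_mult_self mult_twist_self twist_mult_star star_mult_twist)
  consider "star y \<noteq> y" | "star (y \<otimes> x) \<noteq> y \<otimes> x" | "star (y \<otimes> star x) \<noteq> y \<otimes> star x"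
    | "star y = y" "star (y \<otimes> x) = y \<otimes> x" "star (y \<otimes> star x) = y \<otimes> star x"
    by blast
  then show ?thesis
  proof cases
    case 1
    then show ?thesis
      using twist_commute_nonsymmetric[OF x nx y] by simp
  next
    case 2
    then show ?thesis
      using commute_of_commute_mult[OF c y x c_x] twist_commute_nonsymmetric[OF x nx] x y by simp
  next
    case 3
    then show ?thesis
      using commute_of_commute_mult[OF c y xs c_xs] twist_commute_nonsymmetric[OF x nx] xs y by simp
  next
    case 4
    then have yx: "star x \<otimes> y = y \<otimes> x" and yxs: "x \<otimes> y = y \<otimes> star x"
      using x y by (simp_all add: star_mult)
    have "(?c \<otimes> y) \<otimes> x = (?c \<otimes> star x) \<otimes> y"
      using x y c yx by (simp add: m_assoc)
    also have "\<dots> = (y \<otimes> ?c) \<otimes> x"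
      using x y c yxs by (simp add: m_assoc twist_mult_star twist_mult_self)
    finally show ?thesis
      using x y c by simp
  qed
qed

end

theorem lemma3p11:
  fixes G :: "('g, 'b) monoid_scheme"
    and star :: "'g \<Rightarrow> 'g"
    and \<sigma> :: "'g \<Rightarrow> 'r::comm_ring_1"
  assumes grp: "group G"
    and char: "CHAR('r) \<noteq> 2"
    and star_closed: "\<And>x. x \<in> carrier G \<Longrightarrow> star x \<in> carrier G"
    and star_mult: "\<And>x y. x \<in> carrier G \<Longrightarrow> y \<in> carrier G \<Longrightarrow>
                       star (x \<otimes>\<^bsub>G\<^esub> y) = star y \<otimes>\<^bsub>G\<^esub> star x"
    and star_star: "\<And>x. x \<in> carrier G \<Longrightarrow> star (star x) = x"
    and sigma_unit: "\<And>x. x \<in> carrier G \<Longrightarrow> \<sigma> x dvd 1"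
    and sigma_hom: "\<And>x y. x \<in> carrier G \<Longrightarrow> y \<in> carrier G \<Longrightarrow>
                       \<sigma> (x \<otimes>\<^bsub>G\<^esub> y) = \<sigma> x * \<sigma> y"
    and sigma_nontriv: "\<exists>x\<in>carrier G. \<sigma> x \<noteq> 1"
    and compat: "\<And>x. x \<in> carrier G \<Longrightarrow> \<sigma> (x \<otimes>\<^bsub>G\<^esub> star x) = 1"
    and anticomm: "anticommutative G (S_set G star \<sigma>)"
  shows "\<forall>x\<in>carrier G. star x \<otimes>\<^bsub>G\<^esub> inv\<^bsub>G\<^esub> x \<in> group_center G"
proof -
  have "(2::'r) \<noteq> 0"
  proof
    assume "(2::'r) = 0"
    then have "CHAR('r) dvd 2"
      using of_nat_eq_0_iff_char_dvd[of 2, where 'a='r] by simp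
    with char have "CHAR('r) = 1"
      using dvd_imp_le[of "CHAR('r)" 2] by (cases "CHAR('r)"; auto; presburger)
    then show False
      using of_nat_eq_0_iff_char_dvd[of 1, where 'a='r] by simp
  qed
  then interpret S_anticommutative G star \<sigma>
    using grp star_closed star_mult star_star sigma_unit sigma_hom compat anticomm
    by (intro S_anticommutative.intro S_anticommutative_axioms.intro)
  show ?thesis
    unfolding group_center_def using twist_commute by (auto simp: twist_def)
qed

end
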